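(* Let $u\in[-1,1]^k$, and let $\pi$ be a permutation of $[k]$ and $y\in\mathcal{Y}$ with $u\in P_{\pi,y}$. Then $V^u_{\pi,y}:=\{\mathbbm{1}_{\pi,i}\odot y: i\in\{0,\dots,k\},\ \alpha_i(|u|)\neq0\}$ is a subset of $V_{\pi,y}$ with $u\in\mathrm{conv}(V^u_{\pi,y})$, and it has the smallest cardinality among all subsets $W\subseteq V_{\pi,y}$ with $u\in\mathrm{conv}(W)$.
   Context: $[k]=\{1,\dots,k\}$, $\mathcal{Y}=\{-1,1\}^k$; $\odot$ entrywise product, $|u|$ entrywise absolute value. For $i\in\{0,\dots,k\}$, $\mathbbm{1}_{\pi,i}$ is the indicator vector of $\{\pi_1,\dots,\pi_i\}$ ($\mathbbm{1}_{\pi,0}=0$); $V_{\pi,y}=\{\mathbbm{1}_{\pi,i}\odot y:i=0,\dots,k\}$ and $P_{\pi,y}=\mathrm{conv}(V_{\pi,y})$. For $x\in\mathbb{R}^k_+$ ordered by $\pi$ (i.e. $x_{\pi_1}\ge\dots\ge x_{\pi_k}$), $\alpha_0(x)=1-x_{\pi_1}$, $\alpha_i(x)=x_{\pi_i}-x_{\pi_{i+1}}$ for $1\le i\le k-1$, and $\alpha_k(x)=x_{\pi_k}$, so that $x=\sum_{i=0}^k\alpha_i(x)\mathbbm{1}_{\pi,i}$. *)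

theory Defs
  imports "HOL-Analysis.Analysis"
begin

text \<open>Coordinates are indexed by a finite type 'n with k = CARD('n).
  A permutation pi of [k] is a bijection from {1..k} onto the index type;
  p i is the i-th element pi_i.\<close>

definition is_perm :: "(nat \<Rightarrow> 'n::finite) \<Rightarrow> bool" where
  "is_perm p \<longleftrightarrow> bij_betw p {1..CARD('n)} UNIV"

definition sign_vec :: "real^'n \<Rightarrow> bool" where
  "sign_vec y \<longleftrightarrow> (\<forall>j. y$j = -1 \<or> y$j = 1)"

definition ind :: "(nat \<Rightarrow> 'n::finite) \<Rightarrow> nat \<Rightarrow> real^'n" where
  "ind p i = (\<chi> j. if j \<in> p ` {1..i} then 1 else 0)"

definition emul :: "real^'n \<Rightarrow> real^'n \<Rightarrow> real^'n" where
  "emul a b = (\<chi> j. a$j * b$j)"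

definition vabs :: "real^'n \<Rightarrow> real^'n" where
  "vabs u = (\<chi> j. \<bar>u$j\<bar>)"

definition Vset :: "(nat \<Rightarrow> 'n::finite) \<Rightarrow> real^'n \<Rightarrow> (real^'n) set" where
  "Vset p y = {emul (ind p i) y | i. i \<le> CARD('n)}"

definition Pset :: "(nat \<Rightarrow> 'n::finite) \<Rightarrow> real^'n \<Rightarrow> (real^'n) set" where
  "Pset p y = convex hull (Vset p y)"

definition alpha :: "(nat \<Rightarrow> 'n::finite) \<Rightarrow> real^'n \<Rightarrow> nat \<Rightarrow> real" where
  "alpha p x i =
     (if i = 0 then 1 - x $ p 1
      else if i < CARD('n) then x $ p i - x $ p (i+1)
      else x $ p (CARD('n)))"

definition Vu :: "(nat \<Rightarrow> 'n::finite) \<Rightarrow> real^'n \<Rightarrow> real^'n \<Rightarrow> (real^'n) set" where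
  "Vu p y u = {emul (ind p i) y | i. i \<le> CARD('n) \<and> alpha p (vabs u) i \<noteq> 0}"

end

theory Submission
  imports Defs
begin

text \<open>Write \<open>v\<^sub>i = ind p i \<odot> y\<close>. The coordinate \<open>\<pi>\<^sub>m\<close> of \<open>v\<^sub>i\<close> is \<open>y\<^sub>\<pi>\<^sub>m\<close> if \<open>m \<le> i\<close> and \<open>0\<close>
  otherwise, so for any convex combination \<open>u = \<Sum>\<^sub>i \<lambda>\<^sub>i v\<^sub>i\<close> one gets
  \<open>|u|\<^sub>\<pi>\<^sub>m = \<lambda>\<^sub>m + \<dots> + \<lambda>\<^sub>k\<close>; taking differences, \<open>\<lambda>\<^sub>i = \<alpha>\<^sub>i(|u|)\<close>. Hence the barycentric
  coordinates of \<open>u\<close> with respect to \<open>V\<^sub>\<pi>\<^sub>,\<^sub>y\<close> are unique and equal to \<open>\<alpha>(|u|)\<close>: every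
  \<open>W \<subseteq> V\<^sub>\<pi>\<^sub>,\<^sub>y\<close> with \<open>u \<in> conv W\<close> contains \<open>V\<^sup>u\<^sub>\<pi>\<^sub>,\<^sub>y\<close>, and \<open>u\<close> lies in the convex hull
  of the support \<open>V\<^sup>u\<^sub>\<pi>\<^sub>,\<^sub>y\<close> of these coordinates.\<close>

lemma convex_combination_in_convex_hull_support:
  fixes f :: "'i \<Rightarrow> 'a::real_vector"
  assumes "finite I" "\<forall>i\<in>I. 0 \<le> l i" "sum l I = 1"
  shows "(\<Sum>i\<in>I. l i *\<^sub>R f i) \<in> convex hull (f ` {i\<in>I. l i \<noteq> 0})"
proof -
  let ?S = "{i\<in>I. l i \<noteq> 0}"
  have "(\<Sum>i\<in>I. l i *\<^sub>R f i) = (\<Sum>i\<in>?S. l i *\<^sub>R f i)"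
    using assms(1) by (intro sum.mono_neutral_right) auto
  also have "\<dots> \<in> convex hull (f ` ?S)"
  proof (rule convex_sum[OF _ convex_convex_hull])
    show "finite ?S" using assms(1) by simp
    have "sum l I = sum l ?S" using assms(1) by (intro sum.mono_neutral_right) auto
    then show "sum l ?S = 1" using assms(3) by simp
    show "0 \<le> l i" if "i \<in> ?S" for i using assms(2) that by simp
    show "f i \<in> convex hull (f ` ?S)" if "i \<in> ?S" for i using that by (simp add: hull_inc)
  qed
  finally show ?thesis .
qed

lemma convex_hull_subset_image_coefficients:
  fixes f :: "'i \<Rightarrow> 'a::real_vector"
  assumes "finite I" "inj_on f I" "W \<subseteq> f ` I" "u \<in> convex hull W"
  obtains l where "\<forall>i\<in>I. 0 \<le> l i" "\<forall>i\<in>I. l i \<noteq> 0 \<longrightarrow> f i \<in> W"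
    "sum l I = 1" "u = (\<Sum>i\<in>I. l i *\<^sub>R f i)"
proof -
  have "finite W" using assms(1,3) by (meson finite_imageI finite_subset)
  then obtain c where c_nonneg: "\<forall>x\<in>W. 0 \<le> c x" and c_sum: "sum c W = 1"
    and c_comb: "(\<Sum>x\<in>W. c x *\<^sub>R x) = u"
    using assms(4) convex_hull_finite[OF \<open>finite W\<close>] by auto
  define J where "J = {i\<in>I. f i \<in> W}"
  define l where "l i = (if f i \<in> W then c (f i) else 0)" for i
  have W_eq: "W = f ` J" using assms(3) unfolding J_def by blast
  have inj_J: "inj_on f J" using assms(2) by (rule inj_on_subset) (simp add: J_def)
  have sum_W: "sum g W = (\<Sum>i\<in>I. if f i \<in> W then g (f i) else 0)"
    for g :: "'a \<Rightarrow> 'b::comm_monoid_add"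
  proof -
    have "sum g W = sum (g \<circ> f) J" unfolding W_eq by (rule sum.reindex[OF inj_J])
    also have "\<dots> = (\<Sum>i\<in>I. if f i \<in> W then g (f i) else 0)"
      unfolding J_def by (simp add: sum.inter_filter[OF assms(1)])
    finally show ?thesis .
  qed
  show thesis
  proof
    show "\<forall>i\<in>I. 0 \<le> l i" using c_nonneg by (simp add: l_def)
    show "\<forall>i\<in>I. l i \<noteq> 0 \<longrightarrow> f i \<in> W" by (simp add: l_def)
    show "sum l I = 1" using c_sum sum_W[of c] by (simp add: l_def)
    have "l i *\<^sub>R f i = (if f i \<in> W then c (f i) *\<^sub>R f i else 0)" for i
      by (simp add: l_def)
    then show "u = (\<Sum>i\<in>I. l i *\<^sub>R f i)" using c_comb sum_W[of "\<lambda>x. c x *\<^sub>R x"] by simp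
  qed
qed

abbreviation vertex :: "(nat \<Rightarrow> 'n::finite) \<Rightarrow> real^'n \<Rightarrow> nat \<Rightarrow> real^'n" where
  "vertex p y i \<equiv> emul (ind p i) y"

lemma emul_nth [simp]: "emul a b $ j = a $ j * b $ j"
  unfolding emul_def by simp

lemma ind_nth_perm:
  fixes p :: "nat \<Rightarrow> 'n::finite"
  assumes "is_perm p" "1 \<le> m" "m \<le> CARD('n)" "i \<le> CARD('n)"
  shows "ind p i $ p m = (if m \<le> i then 1 else 0)"
proof -
  have "inj_on p {1..CARD('n)}"
    using assms(1) unfolding is_perm_def by (rule bij_betw_imp_inj_on)
  then have "p m \<in> p ` {1..i} \<longleftrightarrow> m \<in> {1..i}"
    by (rule inj_on_image_mem_iff) (use assms in auto)
  then show ?thesis using assms(2) unfolding ind_def by auto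
qed

lemma sign_vec_nth_abs: "sign_vec y \<Longrightarrow> \<bar>y $ j\<bar> = 1"
  unfolding sign_vec_def by (metis abs_1 abs_minus_cancel)

lemma inj_on_vertex:
  fixes p :: "nat \<Rightarrow> 'n::finite"
  assumes "is_perm p" "sign_vec y"
  shows "inj_on (vertex p y) {..CARD('n)}"
proof -
  have le: "i \<le> j" if "i \<le> CARD('n)" "j \<le> CARD('n)" "vertex p y i = vertex p y j" for i j
  proof (rule ccontr)
    assume "\<not> i \<le> j"
    then have "1 \<le> i" by simp
    have "vertex p y i $ p i = y $ p i"
      using ind_nth_perm[OF assms(1) \<open>1 \<le> i\<close> that(1) that(1)] by simp
    moreover have "vertex p y j $ p i = 0"
      using ind_nth_perm[OF assms(1) \<open>1 \<le> i\<close> that(1) that(2)] \<open>\<not> i \<le> j\<close> by simp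
    moreover have "y $ p i \<noteq> 0" using sign_vec_nth_abs[OF assms(2), of "p i"] by auto
    ultimately show False using that(3) by simp
  qed
  show ?thesis
  proof (rule inj_onI)
    fix i j assume "i \<in> {..CARD('n)}" "j \<in> {..CARD('n)}" "vertex p y i = vertex p y j"
    then show "i = j" using le[of i j] le[of j i] by simp
  qed
qed

lemma Vset_eq_image: "Vset p y = vertex p y ` {..CARD('n)}"
  for p :: "nat \<Rightarrow> 'n::finite"
  unfolding Vset_def by auto

lemma vabs_nth_convex_combination_vertex:
  fixes p :: "nat \<Rightarrow> 'n::finite"
  assumes "is_perm p" "sign_vec y" "\<forall>i\<le>CARD('n). 0 \<le> l i"
    and "u = (\<Sum>i\<le>CARD('n). l i *\<^sub>R vertex p y i)" "1 \<le> m" "m \<le> CARD('n)"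
  shows "vabs u $ p m = (\<Sum>i=m..CARD('n). l i)"
proof -
  have "u $ p m = (\<Sum>i\<le>CARD('n). if m \<le> i then l i * y $ p m else 0)"
    unfolding assms(4) by (auto simp: ind_nth_perm[OF assms(1) assms(5,6)] intro: sum.cong)
  also have "\<dots> = (\<Sum>i=m..CARD('n). l i) * y $ p m"
    by (simp add: sum.If_cases sum_distrib_right atLeastAtMost_def atLeast_def Int_commute)
  finally have "u $ p m = (\<Sum>i=m..CARD('n). l i) * y $ p m" .
  moreover have "0 \<le> (\<Sum>i=m..CARD('n). l i)" using assms(3) by (intro sum_nonneg) simp
  ultimately show ?thesis
    using sign_vec_nth_abs[OF assms(2)] by (simp add: vabs_def abs_mult)
qed

lemma alpha_vabs_eq_convex_coefficient:
  fixes p :: "nat \<Rightarrow> 'n::finite"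
  assumes "is_perm p" "sign_vec y" "\<forall>i\<le>CARD('n). 0 \<le> l i" "(\<Sum>i\<le>CARD('n). l i) = 1"
    and "u = (\<Sum>i\<le>CARD('n). l i *\<^sub>R vertex p y i)" "i \<le> CARD('n)"
  shows "alpha p (vabs u) i = l i"
proof -
  let ?k = "CARD('n)"
  have tail: "vabs u $ p m = (\<Sum>j=m..?k. l j)" if "1 \<le> m" "m \<le> ?k" for m
    using vabs_nth_convex_combination_vertex[OF assms(1,2,3,5) that] .
  have tail_split: "(\<Sum>j=m..?k. l j) = l m + (\<Sum>j=Suc m..?k. l j)" if "m \<le> ?k" for m
    using that by (simp add: sum.atLeast_Suc_atMost)
  have k_pos: "1 \<le> ?k" by (simp add: Suc_leI)
  consider "i = 0" | "0 < i" "i < ?k" | "i = ?k" using assms(6) by linarith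
  then show ?thesis
  proof cases
    case 1
    have "(\<Sum>j=0..?k. l j) = 1" using assms(4) by (simp add: atMost_atLeast0)
    then show ?thesis using 1 tail[of 1] tail_split[of 0] k_pos by (simp add: alpha_def)
  next
    case 2
    then show ?thesis using tail[of i] tail[of "i + 1"] tail_split[of i] by (simp add: alpha_def)
  next
    case 3
    then show ?thesis using tail[of ?k] k_pos by (simp add: alpha_def)
  qed
qed

lemma convex_hull_subset_Vset_barycentric_alpha:
  fixes p :: "nat \<Rightarrow> 'n::finite"
  assumes "is_perm p" "sign_vec y" "W \<subseteq> Vset p y" "u \<in> convex hull W"
  shows "\<forall>i\<le>CARD('n). 0 \<le> alpha p (vabs u) i"
    and "\<forall>i\<le>CARD('n). alpha p (vabs u) i \<noteq> 0 \<longrightarrow> vertex p y i \<in> W"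
    and "(\<Sum>i\<le>CARD('n). alpha p (vabs u) i) = 1"
    and "u = (\<Sum>i\<le>CARD('n). alpha p (vabs u) i *\<^sub>R vertex p y i)"
proof -
  obtain l where l_nonneg: "\<forall>i\<in>{..CARD('n)}. 0 \<le> l i"
    and l_support: "\<forall>i\<in>{..CARD('n)}. l i \<noteq> 0 \<longrightarrow> vertex p y i \<in> W"
    and l_sum: "(\<Sum>i\<le>CARD('n). l i) = 1"
    and l_comb: "u = (\<Sum>i\<le>CARD('n). l i *\<^sub>R vertex p y i)"
    by (rule convex_hull_subset_image_coefficients[OF finite_atMost inj_on_vertex[OF assms(1,2)]
          assms(3)[unfolded Vset_eq_image] assms(4)])
  have alpha_eq: "alpha p (vabs u) i = l i" if "i \<le> CARD('n)" for i
    using alpha_vabs_eq_convex_coefficient[OF assms(1,2) _ l_sum l_comb that] l_nonneg by simp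
  show "\<forall>i\<le>CARD('n). 0 \<le> alpha p (vabs u) i" using l_nonneg alpha_eq by simp
  show "\<forall>i\<le>CARD('n). alpha p (vabs u) i \<noteq> 0 \<longrightarrow> vertex p y i \<in> W"
    using l_support alpha_eq by simp
  show "(\<Sum>i\<le>CARD('n). alpha p (vabs u) i) = 1" using l_sum alpha_eq by simp
  show "u = (\<Sum>i\<le>CARD('n). alpha p (vabs u) i *\<^sub>R vertex p y i)" using l_comb alpha_eq by simp
qed

lemma Vu_subset_if_in_convex_hull:
  fixes p :: "nat \<Rightarrow> 'n::finite"
  assumes "is_perm p" "sign_vec y" "W \<subseteq> Vset p y" "u \<in> convex hull W"
  shows "Vu p y u \<subseteq> W"
  using convex_hull_subset_Vset_barycentric_alpha(2)[OF assms] unfolding Vu_def by auto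

lemma in_convex_hull_Vu:
  fixes p :: "nat \<Rightarrow> 'n::finite"
  assumes "is_perm p" "sign_vec y" "u \<in> Pset p y"
  shows "u \<in> convex hull Vu p y u"
proof -
  note alpha = convex_hull_subset_Vset_barycentric_alpha[OF assms(1,2) order_refl
      assms(3)[unfolded Pset_def]]
  have "Vu p y u = vertex p y ` {i\<in>{..CARD('n)}. alpha p (vabs u) i \<noteq> 0}"
    unfolding Vu_def by auto
  then show ?thesis
    using convex_combination_in_convex_hull_support[of "{..CARD('n)}" "alpha p (vabs u)" "vertex p y"]
      alpha(1,3,4) by simp
qed

theorem lemma11:
  fixes u y :: "real^'n::finite" and p :: "nat \<Rightarrow> 'n"
  assumes "\<forall>j. \<bar>u$j\<bar> \<le> 1"
    and "is_perm p"
    and "sign_vec y"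
    and "u \<in> Pset p y"
  shows "Vu p y u \<subseteq> Vset p y \<and> u \<in> convex hull (Vu p y u) \<and>
         (\<forall>W. W \<subseteq> Vset p y \<and> u \<in> convex hull W \<longrightarrow> card (Vu p y u) \<le> card W)"
proof (intro conjI allI impI)
  show "Vu p y u \<subseteq> Vset p y" unfolding Vu_def Vset_def by auto
  show "u \<in> convex hull Vu p y u" using in_convex_hull_Vu[OF assms(2-4)] .
  fix W assume W: "W \<subseteq> Vset p y \<and> u \<in> convex hull W"
  then have "finite W" unfolding Vset_eq_image by (meson finite_atMost finite_imageI finite_subset)
  then show "card (Vu p y u) \<le> card W"
    using Vu_subset_if_in_convex_hull[OF assms(2,3)] W by (intro card_mono) auto
qed

end
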